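(* Let $m,n\geq 0$ be integers. Then \[ \sum_{k=1}^{n}\frac{(q/z;q)_{k}(vq^m;q)_{k}(z;q)_{n-k}(z;q)_m}{(q;q)_k (v;q)_{k} (q;q)_{n-k}(q^k;q)_{m+1}}z^k -\sum_{k=1}^{m}\frac{(q/z;q)_{k} (vq^n;q)_{k}(z;q)_{m-k}(z;q)_n}{(q;q)_k (v;q)_{k}(q;q)_{m-k}(q^k;q)_{n+1}}z^k \] \[ =\frac{(1-zq^{-1})(z;q)_m(z;q)_n}{(q;q)_{m}(q;q)_{n}}\left(\sum_{k=1}^m\frac{q^k}{(1-zq^{k-1})(1-q^k)}-\sum_{k=1}^n\frac{q^k}{(1-zq^{k-1})(1-q^k)}\right). \]
   Context: For $N\geq 0$, $(x;q)_N=(1-x)(1-xq)\cdots(1-xq^{N-1})$ (with $(x;q)_0=1$). The identity is one of rational functions in $q,z,v$. *)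

theory Defs
  imports Complex_Main
begin

definition qpoch :: "'a::comm_ring_1 \<Rightarrow> 'a \<Rightarrow> nat \<Rightarrow> 'a" where
  "qpoch x q N = (\<Prod>i<N. (1 - x * q ^ i))"

end

theory Submission
  imports Defs
begin

text \<open>Expand the ratio (q/z;q)_k (vq^m;q)_k / (v;q)_k as a terminating sum over j whose j = 0
  term is (q^(m+1)/z;q)_k. Inserting this into the first sum and exchanging the summations, the
  part with j \<ge> 1 becomes, for each j, a q-Chu-Vandermonde sum in k whose value is symmetric in
  m and n, so it cancels in the difference of the two sums. The remaining j = 0 part satisfies a
  first-order recurrence in n, solved by (z;q)_n / ((q;q)_n (q;q)_m) times
  \<Sum>_{i<n} zq^i/(1-zq^i) - \<Sum>_{i=m+1..m+n} q^i/(1-q^i); the difference of two such expressions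
  is the right-hand side. Each of the three summation identities is proved by an explicit
  telescoping certificate in the style of Zeilberger's algorithm.\<close>

lemma qpoch_0 [simp]: "qpoch x q 0 = 1"
  by (simp add: qpoch_def)

lemma qpoch_Suc: "qpoch x q (Suc N) = qpoch x q N * (1 - x * q ^ N)"
  by (simp add: qpoch_def)

lemma qpoch_add: "qpoch x q (a + b) = qpoch x q a * qpoch (x * q ^ a) q b"
  by (induction b) (simp_all add: qpoch_Suc power_add mult_ac)

lemma qpoch_nonzero:
  fixes x q :: "'a::idom"
  assumes "\<And>i. i < N \<Longrightarrow> x * q ^ i \<noteq> 1"
  shows "qpoch x q N \<noteq> 0"
  using assms unfolding qpoch_def by auto

lemma sum_telescoping_combination:
  fixes F E G :: "nat \<Rightarrow> 'a::comm_ring"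
  assumes "a \<le> Suc b"
    and "\<And>l. a \<le> l \<Longrightarrow> l \<le> b \<Longrightarrow> X * F l - Y * E l = G (Suc l) - G l"
  shows "X * (\<Sum>l=a..b. F l) - Y * (\<Sum>l=a..b. E l) = G (Suc b) - G a"
proof -
  have "X * (\<Sum>l=a..b. F l) - Y * (\<Sum>l=a..b. E l) = (\<Sum>l=a..b. X * F l - Y * E l)"
    by (simp add: sum_subtractf sum_distrib_left)
  also have "\<dots> = (\<Sum>l=a..b. G (Suc l) - G l)"
    using assms(2) by (intro sum.cong) auto
  also have "\<dots> = G (Suc b) - G a"
    using assms(1) by (rule sum_Suc_diff)
  finally show ?thesis .
qed

lemma sum_atLeast1_triangle_swap:
  fixes F :: "nat \<Rightarrow> nat \<Rightarrow> 'a::comm_monoid_add"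
  shows "(\<Sum>k=1..n. \<Sum>j=1..k. F k j) = (\<Sum>j=1..n. \<Sum>k=j..n. F k j)"
proof (induction n)
  case 0
  then show ?case by simp
next
  case (Suc n)
  have "(\<Sum>j=1..Suc n. \<Sum>k=j..Suc n. F k j) = (\<Sum>j=1..Suc n. (\<Sum>k=j..n. F k j) + F (Suc n) j)"
    by (rule sum.cong) auto
  also have "\<dots> = (\<Sum>j=1..n. \<Sum>k=j..n. F k j) + (\<Sum>j=1..Suc n. F (Suc n) j)"
    by (simp add: sum.distrib)
  finally show ?case using Suc.IH by simp
qed

locale qz_generic =
  fixes q z :: "'a::field"
  assumes q_nonzero: "q \<noteq> 0" and z_nonzero: "z \<noteq> 0"
    and q_power_ne_1: "\<And>j. j \<ge> 1 \<Longrightarrow> q ^ j \<noteq> 1"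
    and z_q_power_ne_1: "\<And>j. z * q ^ j \<noteq> 1"
begin

lemma one_minus_q_power_nonzero: "1 - q * q ^ j \<noteq> 0"
  using q_power_ne_1[of "Suc j"] by simp

lemma one_minus_z_power_nonzero: "1 - z * q ^ j \<noteq> 0"
  using z_q_power_ne_1 by simp

lemma qpoch_q_nonzero: "qpoch q q N \<noteq> 0"
  using q_power_ne_1 by (intro qpoch_nonzero) (simp flip: power_Suc)

lemma qpoch_z_nonzero: "qpoch z q N \<noteq> 0"
  using z_q_power_ne_1 by (intro qpoch_nonzero)

lemma qpoch_q_power_nonzero: "k \<ge> 1 \<Longrightarrow> qpoch (q ^ k) q N \<noteq> 0"
  using q_power_ne_1 by (intro qpoch_nonzero) (simp flip: power_add)

definition vandermonde_term :: "'a \<Rightarrow> nat \<Rightarrow> nat \<Rightarrow> nat \<Rightarrow> 'a" where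
  "vandermonde_term b m N l = qpoch (q^(m+1)/z) q l * z^l * qpoch z q (N-l)
     / (qpoch q q l * qpoch q q (N-l) * qpoch (b*q^l) q (m+1))"

definition vandermonde_cert :: "'a \<Rightarrow> nat \<Rightarrow> nat \<Rightarrow> nat \<Rightarrow> 'a" where
  "vandermonde_cert b m N l =
     - (q^(Suc N - l) * (1 - q^l) * (1 - b*q^(m+l)) * vandermonde_term b m (Suc N) l)"

lemma vandermonde_term_factored:
  fixes b :: 'a and m l d :: nat
  assumes b: "\<And>i. i \<ge> l \<Longrightarrow> b*q^i \<noteq> 1"
  defines "B \<equiv> qpoch (q^(m+1)/z) q l * z^l * qpoch z q d / (qpoch q q (Suc l) * qpoch q q (Suc d)
     * qpoch (b*q^(Suc l)) q m * (1 - b*q^l) * (1 - b*q^(Suc l)*q^m))"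
  shows "vandermonde_term b m (l+d) l = B * ((1 - q*q^l) * (1 - q*q^d) * (1 - b*q^(Suc l)*q^m))"
    and "vandermonde_term b m (Suc (l+d)) l = B * ((1 - q*q^l) * (1 - z*q^d) * (1 - b*q^(Suc l)*q^m))"
    and "vandermonde_term b m (Suc (l+d)) (Suc l) = B * ((1 - q^(m+1)/z*q^l) * z * (1 - q*q^d) * (1 - b*q^l))"
proof -
  have split_first: "qpoch (b*q^l) q (m+1) = (1 - b*q^l) * qpoch (b*q^(Suc l)) q m"
    using qpoch_add[of "b*q^l" q 1 m] by (simp add: qpoch_def mult_ac)
  have split_last: "qpoch (b*q^(Suc l)) q (m+1) = qpoch (b*q^(Suc l)) q m * (1 - b*q^(Suc l)*q^m)"
    by (simp add: qpoch_Suc)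
  have b_nonzero: "1 - b*q^l \<noteq> 0" "1 - b*q^(Suc l)*q^m \<noteq> 0" "qpoch (b*q^(Suc l)) q m \<noteq> 0"
    using b[of l] b[of "Suc l + m"] b[of "Suc l + _"] by (auto simp: power_add mult_ac intro!: qpoch_nonzero)
  note nonzero = b_nonzero qpoch_q_nonzero[of l] qpoch_q_nonzero[of d]
    one_minus_q_power_nonzero[of l] one_minus_q_power_nonzero[of d]
  show "vandermonde_term b m (l+d) l = B * ((1 - q*q^l) * (1 - q*q^d) * (1 - b*q^(Suc l)*q^m))"
    unfolding vandermonde_term_def B_def split_first using nonzero
    by (simp add: qpoch_Suc) (simp add: divide_simps)
  show "vandermonde_term b m (Suc (l+d)) l = B * ((1 - q*q^l) * (1 - z*q^d) * (1 - b*q^(Suc l)*q^m))"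
    unfolding vandermonde_term_def B_def split_first using nonzero
    by (simp add: qpoch_Suc Suc_diff_le) (simp add: divide_simps)
  show "vandermonde_term b m (Suc (l+d)) (Suc l) = B * ((1 - q^(m+1)/z*q^l) * z * (1 - q*q^d) * (1 - b*q^l))"
    unfolding vandermonde_term_def B_def split_last using nonzero z_nonzero
    by (simp add: qpoch_Suc) (simp add: divide_simps)
qed

lemma vandermonde_telescoping:
  assumes "l \<le> N" and b: "\<And>i. i \<ge> l \<Longrightarrow> b*q^i \<noteq> 1"
  shows "(1 - q^(Suc N))*(1 - b*q^(N+m+1)) * vandermonde_term b m (Suc N) l
       - (1 - b*z*q^N)*(1 - q^(N+m+1)) * vandermonde_term b m N l
     = vandermonde_cert b m N (Suc l) - vandermonde_cert b m N l"
proof -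
  obtain d where N: "N = l + d"
    using assms(1) le_Suc_ex by blast
  have "Suc (l+d) - l = Suc d" "Suc (l+d) - Suc l = d"
    by simp_all
  then show ?thesis
    unfolding vandermonde_cert_def N vandermonde_term_factored[OF b, of l m d, simplified]
    using q_nonzero z_nonzero
    by (simp add: power_add) (simp add: divide_simps, simp add: algebra_simps)
qed

lemma vandermonde_partial_sum_recurrence:
  assumes "a \<le> Suc N" and b: "\<And>i. i \<ge> a \<Longrightarrow> b*q^i \<noteq> 1"
  shows "(1 - q^(Suc N))*(1 - b*q^(N+m+1)) * (\<Sum>l=a..Suc N. vandermonde_term b m (Suc N) l)
       = (1 - b*z*q^N)*(1 - q^(N+m+1)) * (\<Sum>l=a..N. vandermonde_term b m N l) - vandermonde_cert b m N a"
proof -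
  define X where "X = (1 - q^(Suc N))*(1 - b*q^(N+m+1))"
  have "X * (\<Sum>l=a..N. vandermonde_term b m (Suc N) l)
      - (1 - b*z*q^N)*(1 - q^(N+m+1)) * (\<Sum>l=a..N. vandermonde_term b m N l)
      = vandermonde_cert b m N (Suc N) - vandermonde_cert b m N a"
    unfolding X_def using assms by (intro sum_telescoping_combination vandermonde_telescoping) auto
  moreover have "X * vandermonde_term b m (Suc N) (Suc N) = - vandermonde_cert b m N (Suc N)"
    unfolding X_def vandermonde_cert_def by (simp add: ac_simps)
  ultimately show ?thesis
    unfolding X_def[symmetric] using assms(1) by (simp add: algebra_simps)
qed

lemma q_vandermonde_sum:
  assumes "j \<ge> 1"
  shows "(\<Sum>l=0..N. vandermonde_term (q^j) m N l)
       = qpoch (q^j*z) q N * qpoch q q (N+m) / (qpoch q q N * qpoch q q m * qpoch (q^j) q (N+m+1))"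
proof (induction N)
  case 0
  then show ?case
    using qpoch_q_nonzero[of m] by (simp add: vandermonde_term_def)
next
  case (Suc N)
  have b: "q^j * q^i \<noteq> 1" for i
    using q_power_ne_1 assms by (simp flip: power_add)
  define X where "X = (1 - q^(Suc N))*(1 - q^j*q^(N+m+1))"
  have "X * (\<Sum>l=0..Suc N. vandermonde_term (q^j) m (Suc N) l)
      = (1 - q^j*z*q^N)*(1 - q^(N+m+1)) * (\<Sum>l=0..N. vandermonde_term (q^j) m N l)"
    unfolding X_def using vandermonde_partial_sum_recurrence[of 0 N "q^j" m] b
    by (simp add: vandermonde_cert_def)
  moreover have "X \<noteq> 0"
    unfolding X_def using one_minus_q_power_nonzero[of N] b[of "N+m+1"] by simp
  ultimately have "(\<Sum>l=0..Suc N. vandermonde_term (q^j) m (Suc N) l)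
      = (1 - q^j*z*q^N)*(1 - q^(N+m+1)) * (\<Sum>l=0..N. vandermonde_term (q^j) m N l) / X"
    by (simp add: field_simps)
  also have "\<dots> = qpoch (q^j*z) q (Suc N) * qpoch q q (Suc N+m)
      / (qpoch q q (Suc N) * qpoch q q m * qpoch (q^j) q (Suc N+m+1))"
    unfolding Suc.IH X_def
    using one_minus_q_power_nonzero[of N] b[of "N+m+1"] qpoch_q_nonzero[of N] qpoch_q_nonzero[of m]
      qpoch_q_nonzero[of "N+m"] qpoch_q_power_nonzero[OF assms, of "N+m+1"]
    by (simp add: qpoch_Suc) (simp add: divide_simps mult_ac)
  finally show ?case .
qed

text \<open>For b = 1 the l = 0 term has the vanishing denominator (1;q)_(m+1), so the sum starts
  at l = 1.\<close>

lemma vandermonde_sum_at_1: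
  "(\<Sum>l=1..N. vandermonde_term 1 m N l) = qpoch z q N / (qpoch q q N * qpoch q q m) *
     ((\<Sum>i<N. z*q^i/(1-z*q^i)) - (\<Sum>i=Suc m..m+N. q^i/(1-q^i)))"
proof (induction N)
  case 0
  then show ?case by simp
next
  case (Suc N)
  define X where "X = (1 - q^(Suc N))*(1 - q^(N+m+1))"
  have cert: "vandermonde_cert 1 m N 1 = q^N * (q^(m+1) - z) * qpoch z q N / (qpoch q q N * qpoch q q m)"
    unfolding vandermonde_cert_def vandermonde_term_def
    using z_nonzero one_minus_q_power_nonzero[of 0] one_minus_q_power_nonzero[of m]
      qpoch_q_nonzero[of N] qpoch_q_nonzero[of m]
    by (simp add: qpoch_Suc qpoch_def[of q q 1]) (simp add: field_simps)
  have "X * (\<Sum>l=1..Suc N. vandermonde_term 1 m (Suc N) l)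
      = (1 - z*q^N)*(1 - q^(N+m+1)) * (\<Sum>l=1..N. vandermonde_term 1 m N l)
        - q^N * (q^(m+1) - z) * qpoch z q N / (qpoch q q N * qpoch q q m)"
    unfolding X_def cert[symmetric] using vandermonde_partial_sum_recurrence[of 1 N 1 m] q_power_ne_1 by simp
  moreover have "X \<noteq> 0"
    unfolding X_def using one_minus_q_power_nonzero[of N] one_minus_q_power_nonzero[of "N+m"] by simp
  ultimately have "(\<Sum>l=1..Suc N. vandermonde_term 1 m (Suc N) l)
      = ((1 - z*q^N)*(1 - q^(N+m+1)) * (\<Sum>l=1..N. vandermonde_term 1 m N l)
         - q^N * (q^(m+1) - z) * qpoch z q N / (qpoch q q N * qpoch q q m)) / X"
    by (simp del: sum.cl_ivl_Suc add: field_simps)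
  also have "\<dots> = qpoch z q (Suc N) / (qpoch q q (Suc N) * qpoch q q m) *
     ((\<Sum>i<Suc N. z*q^i/(1-z*q^i)) - (\<Sum>i=Suc m..m+Suc N. q^i/(1-q^i)))"
    unfolding Suc.IH X_def
    using one_minus_q_power_nonzero[of N] one_minus_q_power_nonzero[of "N+m"] one_minus_z_power_nonzero[of N]
      qpoch_q_nonzero[of N] qpoch_q_nonzero[of m] qpoch_z_nonzero[of N]
    by (simp add: qpoch_Suc) (simp add: divide_simps, simp add: algebra_simps power_add)
  finally show ?case .
qed

lemma sum_partial_fractions:
  "(1 - z/q) * (\<Sum>k=1..m. q^k / ((1 - z*q^(k-1)) * (1 - q^k)))
   = (\<Sum>k=1..m. q^k/(1-q^k)) - (\<Sum>i<m. z*q^i/(1-z*q^i))"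
proof (induction m)
  case 0
  then show ?case by simp
next
  case (Suc m)
  have "(1 - z/q) * (q^Suc m / ((1 - z*q^m) * (1 - q^Suc m))) = q^Suc m/(1-q^Suc m) - z*q^m/(1-z*q^m)"
    using q_nonzero one_minus_z_power_nonzero[of m] one_minus_q_power_nonzero[of m]
    by (simp add: divide_simps) (simp add: algebra_simps)
  then show ?case
    using Suc.IH by (simp add: distrib_left)
qed

end

locale qzv_generic = qz_generic +
  fixes v :: 'a
  assumes v_q_power_ne_1: "\<And>j. v * q ^ j \<noteq> 1"
begin

lemma one_minus_v_power_nonzero: "1 - v * q ^ j \<noteq> 0"
  using v_q_power_ne_1 by simp

lemma qpoch_v_nonzero: "qpoch v q N \<noteq> 0"
  using v_q_power_ne_1 by (intro qpoch_nonzero)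

definition expansion_term :: "nat \<Rightarrow> nat \<Rightarrow> nat \<Rightarrow> 'a" where
  "expansion_term m k j =
     (if j \<le> k \<and> j \<le> m then
        qpoch q q k * qpoch q q m / (qpoch q q j * qpoch q q (k-j) * qpoch q q (m-j))
        * (\<Prod>i<j. q^Suc i) * (-1/z)^j * qpoch (q^(m+1)/z) q (k-j) * qpoch (v*z/q) q j / qpoch v q j
      else 0)"

definition expansion_cert :: "nat \<Rightarrow> nat \<Rightarrow> nat \<Rightarrow> 'a" where
  "expansion_cert m k j =
     - (q^(Suc k-j) * (1-q^j) * (1 - v*q^j/q) * expansion_term m (Suc k) j / (1-q^(Suc k)))"

lemma expansion_term_factored:
  fixes j d c :: nat
  defines "B \<equiv> qpoch q q (j+d) * qpoch q q (j+c)
     / (qpoch q q (Suc j) * qpoch q q (Suc d) * qpoch q q c)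
     * (\<Prod>i<j. q^Suc i) * (-1/z)^j * qpoch (q^(j+c+1)/z) q d * qpoch (v*z/q) q j / qpoch v q (Suc j)"
  shows "expansion_term (j+c) (j+d) j = B * ((1 - q*q^j) * (1 - q*q^d) * (1 - v*q^j))"
    and "expansion_term (j+c) (Suc (j+d)) j
           = B * ((1 - q*q^(j+d)) * (1 - q*q^j) * (1 - v*q^j) * (1 - q^(j+c+1)*q^d/z))"
    and "expansion_term (j+c) (Suc (j+d)) (Suc j)
           = B * ((1 - q*q^(j+d)) * (1 - q*q^d) * (1 - q^c) * (q*q^j) * (-1/z) * (1 - v*z/q*q^j))"
proof -
  note nonzero = qpoch_q_nonzero[of "Suc j"] qpoch_q_nonzero[of "Suc d"] qpoch_q_nonzero[of c]
    qpoch_q_nonzero[of j] qpoch_q_nonzero[of d] qpoch_v_nonzero[of "Suc j"] qpoch_v_nonzero[of j]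
    one_minus_q_power_nonzero[of j] one_minus_q_power_nonzero[of d] one_minus_v_power_nonzero[of j]
  show "expansion_term (j+c) (j+d) j = B * ((1 - q*q^j) * (1 - q*q^d) * (1 - v*q^j))"
    unfolding expansion_term_def B_def using nonzero
    by (simp add: qpoch_Suc) (simp add: divide_simps)
  show "expansion_term (j+c) (Suc (j+d)) j
          = B * ((1 - q*q^(j+d)) * (1 - q*q^j) * (1 - v*q^j) * (1 - q^(j+c+1)*q^d/z))"
    unfolding expansion_term_def B_def using nonzero z_nonzero
    by (simp add: qpoch_Suc Suc_diff_le) (simp add: divide_simps)
  show "expansion_term (j+c) (Suc (j+d)) (Suc j)
          = B * ((1 - q*q^(j+d)) * (1 - q*q^d) * (1 - q^c) * (q*q^j) * (-1/z) * (1 - v*z/q*q^j))"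
  proof (cases c)
    case 0
    then show ?thesis by (simp add: expansion_term_def)
  next
    case (Suc c')
    then show ?thesis
      unfolding expansion_term_def B_def
      using nonzero z_nonzero q_nonzero qpoch_q_nonzero[of c'] one_minus_q_power_nonzero[of c']
      by (simp add: qpoch_Suc) (simp add: divide_simps)
  qed
qed

lemma expansion_telescoping:
  assumes "j \<le> Suc k"
  shows "(1 - v*q^k) * expansion_term m (Suc k) j - (1 - q^(Suc k)/z)*(1 - v*q^(m+k)) * expansion_term m k j
       = expansion_cert m k (Suc j) - expansion_cert m k j"
proof -
  consider "m < j" | "j = Suc k" | c d where "m = j + c" "k = j + d"
    using assms by (metis le_Suc_eq le_iff_add not_le)
  then show ?thesis
  proof cases
    case 1
    then show ?thesis by (simp add: expansion_cert_def expansion_term_def)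
  next
    case 2
    then show ?thesis
      using q_nonzero one_minus_q_power_nonzero[of k]
      by (simp add: expansion_cert_def expansion_term_def divide_simps)
  next
    case 3
    have "Suc (j+d) - j = Suc d" "Suc (j+d) - Suc j = d"
      by simp_all
    then show ?thesis
      unfolding expansion_cert_def 3 expansion_term_factored
      using q_nonzero z_nonzero one_minus_q_power_nonzero[of "j+d"]
      by (simp add: power_add) (simp add: divide_simps, simp add: algebra_simps)
  qed
qed

lemma qpoch_ratio_expansion:
  "qpoch (q/z) q k * qpoch (v*q^m) q k / qpoch v q k = (\<Sum>j=0..k. expansion_term m k j)"
proof (induction k)
  case 0
  then show ?case by (simp add: expansion_term_def qpoch_q_nonzero)
next
  case (Suc k)
  have top_vanishes: "expansion_term m k (Suc k) = 0"
    by (simp add: expansion_term_def)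
  have "(1 - v*q^k) * (\<Sum>j=0..Suc k. expansion_term m (Suc k) j)
      - (1 - q^(Suc k)/z)*(1 - v*q^(m+k)) * (\<Sum>j=0..Suc k. expansion_term m k j)
      = expansion_cert m k (Suc (Suc k)) - expansion_cert m k 0"
    by (intro sum_telescoping_combination expansion_telescoping) auto
  then have "(1 - v*q^k) * (\<Sum>j=0..Suc k. expansion_term m (Suc k) j)
      = (1 - q^(Suc k)/z)*(1 - v*q^(m+k)) * (\<Sum>j=0..k. expansion_term m k j)"
    by (simp del: sum.cl_ivl_Suc
        add: sum.atLeast0_atMost_Suc top_vanishes expansion_cert_def expansion_term_def)
  then show ?case
    unfolding Suc.IH[symmetric] using one_minus_v_power_nonzero[of k] qpoch_v_nonzero[of k]
    by (simp del: sum.cl_ivl_Suc add: qpoch_Suc power_add field_simps)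
qed

definition lhs_sum :: "nat \<Rightarrow> nat \<Rightarrow> 'a" where
  "lhs_sum n m = (\<Sum>k=1..n. qpoch (q/z) q k * qpoch (v * q^m) q k * qpoch z q (n-k) * qpoch z q m
     / (qpoch q q k * qpoch v q k * qpoch q q (n-k) * qpoch (q^k) q (m+1)) * z^k)"

definition lhs_weight :: "nat \<Rightarrow> nat \<Rightarrow> nat \<Rightarrow> 'a" where
  "lhs_weight n m k = qpoch z q (n-k) * qpoch z q m * z^k
     / (qpoch q q k * qpoch q q (n-k) * qpoch (q^k) q (m+1))"

definition symmetric_term :: "nat \<Rightarrow> nat \<Rightarrow> nat \<Rightarrow> 'a" where
  "symmetric_term n m j = (\<Prod>i<j. q^Suc i) * (-1)^j * qpoch (v*z/q) q j / qpoch v q j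
     * (qpoch z q m * qpoch z q n * qpoch q q (n+m-j)
        / (qpoch z q j * qpoch q q j * qpoch q q (m-j) * qpoch q q (n-j) * qpoch (q^j) q (n+m+1-j)))"

lemma symmetric_term_commute: "symmetric_term n m j = symmetric_term m n j"
  unfolding symmetric_term_def by (simp add: ac_simps)

lemma lhs_sum_expanded:
  "lhs_sum n m = (\<Sum>k=1..n. \<Sum>j=0..k. lhs_weight n m k * expansion_term m k j)"
  unfolding lhs_sum_def
proof (intro sum.cong refl)
  fix k
  assume "k \<in> {1..n}"
  then show "qpoch (q/z) q k * qpoch (v * q^m) q k * qpoch z q (n-k) * qpoch z q m
      / (qpoch q q k * qpoch v q k * qpoch q q (n-k) * qpoch (q^k) q (m+1)) * z^k
    = (\<Sum>j=0..k. lhs_weight n m k * expansion_term m k j)"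
    unfolding sum_distrib_left[symmetric] qpoch_ratio_expansion[symmetric] lhs_weight_def
    using qpoch_v_nonzero[of k] qpoch_q_nonzero[of k] qpoch_q_nonzero[of "n-k"]
      qpoch_q_power_nonzero[of k "m+1"]
    by (simp add: divide_simps)
qed

lemma lhs_weight_times_expansion_term_0:
  "lhs_weight n m k * expansion_term m k 0 = qpoch z q m * vandermonde_term 1 m n k"
  unfolding lhs_weight_def vandermonde_term_def expansion_term_def using qpoch_q_nonzero[of m] by simp

lemma lhs_weight_times_expansion_term:
  assumes "1 \<le> j" "j \<le> m"
  shows "lhs_weight n m (l+j) * expansion_term m (l+j) j
       = qpoch q q m / (qpoch q q j * qpoch q q (m-j)) * (\<Prod>i<j. q^Suc i) * (-1)^j
         * qpoch (v*z/q) q j / qpoch v q j * qpoch z q m * vandermonde_term (q^j) m (n-j) l"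
proof -
  have "n - (l+j) = n - j - l"
    by simp
  moreover have "z^j * (-(1/z))^j = (-1)^j"
    using z_nonzero by (simp flip: power_mult_distrib)
  ultimately show ?thesis
    unfolding lhs_weight_def expansion_term_def vandermonde_term_def
    using assms qpoch_q_nonzero[of "l+j"] z_nonzero
    by (simp add: power_add mult_ac)
qed

lemma lhs_column_sum:
  assumes "1 \<le> j" "j \<le> n"
  shows "(\<Sum>k=j..n. lhs_weight n m k * expansion_term m k j)
       = (if j \<le> m then symmetric_term n m j else 0)"
proof (cases "j \<le> m")
  case False
  then show ?thesis by (simp add: expansion_term_def)
next
  case True
  define c where "c = qpoch q q m / (qpoch q q j * qpoch q q (m-j)) * (\<Prod>i<j. q^Suc i) * (-1)^j
    * qpoch (v*z/q) q j / qpoch v q j * qpoch z q m"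
  have split_z: "qpoch z q n = qpoch z q j * qpoch (q^j*z) q (n-j)"
    using qpoch_add[of z q j "n-j"] assms by (simp add: mult.commute)
  have "(\<Sum>k=j..n. lhs_weight n m k * expansion_term m k j)
      = (\<Sum>l=0..n-j. lhs_weight n m (l+j) * expansion_term m (l+j) j)"
    using assms sum.shift_bounds_cl_nat_ivl[of "\<lambda>k. lhs_weight n m k * expansion_term m k j" 0 j "n-j"]
    by simp
  also have "\<dots> = c * (\<Sum>l=0..n-j. vandermonde_term (q^j) m (n-j) l)"
    unfolding c_def sum_distrib_left using True assms by (intro sum.cong refl lhs_weight_times_expansion_term)
  also have "\<dots> = symmetric_term n m j"
    unfolding q_vandermonde_sum[OF assms(1)] c_def symmetric_term_def split_z
    using assms True qpoch_q_nonzero[of m] qpoch_q_nonzero[of j] qpoch_q_nonzero[of "m-j"]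
      qpoch_z_nonzero[of j] qpoch_v_nonzero[of j] qpoch_q_nonzero[of "n-j"]
      qpoch_q_power_nonzero[OF assms(1), of "Suc (n+m-j)"]
    by (simp add: divide_simps Suc_diff_le)
  finally show ?thesis
    using True by simp
qed

lemma lhs_sum_decomposition:
  "lhs_sum n m = qpoch z q m * (\<Sum>k=1..n. vandermonde_term 1 m n k)
     + (\<Sum>j=1..min n m. symmetric_term n m j)"
proof -
  have "lhs_sum n m = (\<Sum>k=1..n. lhs_weight n m k * expansion_term m k 0)
      + (\<Sum>k=1..n. \<Sum>j=1..k. lhs_weight n m k * expansion_term m k j)"
    unfolding lhs_sum_expanded sum.distrib[symmetric]
    by (intro sum.cong refl) (simp add: sum.atLeast_Suc_atMost)
  also have "(\<Sum>k=1..n. \<Sum>j=1..k. lhs_weight n m k * expansion_term m k j)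
      = (\<Sum>j=1..n. if j \<le> m then symmetric_term n m j else 0)"
    unfolding sum_atLeast1_triangle_swap by (intro sum.cong refl) (simp add: lhs_column_sum)
  also have "\<dots> = (\<Sum>j=1..min n m. symmetric_term n m j)"
    by (simp add: sum.inter_filter[symmetric]) (intro sum.cong; auto)
  finally show ?thesis
    by (simp add: lhs_weight_times_expansion_term_0 sum_distrib_left)
qed

lemma lhs_sum_difference:
  "lhs_sum n m - lhs_sum m n = (1 - z / q) * qpoch z q m * qpoch z q n / (qpoch q q m * qpoch q q n)
     * ((\<Sum>k=1..m. q^k / ((1 - z * q^(k-1)) * (1 - q^k)))
      - (\<Sum>k=1..n. q^k / ((1 - z * q^(k-1)) * (1 - q^k))))"
proof -
  define H where "H k = (\<Sum>i=1..k. q^i/(1-q^i))" for k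
  define Z where "Z k = (\<Sum>i<k. z*q^i/(1-z*q^i))" for k
  define S where "S k = (\<Sum>i=1..k. q^i / ((1 - z * q^(i-1)) * (1 - q^i)))" for k
  have tail: "(\<Sum>i=Suc k..k+l. q^i/(1-q^i)) = H (k+l) - H k" for k l
    unfolding H_def using sum.ub_add_nat[of 1 k "\<lambda>i. q^i/(1-q^i)" l] by simp
  have "lhs_sum n m - lhs_sum m n
      = qpoch z q m * (\<Sum>k=1..n. vandermonde_term 1 m n k)
        - qpoch z q n * (\<Sum>k=1..m. vandermonde_term 1 n m k)"
    unfolding lhs_sum_decomposition by (simp add: symmetric_term_commute min.commute)
  also have "\<dots> = qpoch z q m * qpoch z q n / (qpoch q q m * qpoch q q n) * ((H m - Z m) - (H n - Z n))"
    unfolding vandermonde_sum_at_1 tail Z_def[symmetric] using qpoch_q_nonzero[of m] qpoch_q_nonzero[of n]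
    by (simp add: add.commute divide_simps) (simp add: algebra_simps)
  also have "\<dots> = qpoch z q m * qpoch z q n / (qpoch q q m * qpoch q q n)
      * ((1 - z/q) * S m - (1 - z/q) * S n)"
    unfolding S_def H_def Z_def sum_partial_fractions ..
  also have "\<dots> = (1 - z / q) * qpoch z q m * qpoch z q n / (qpoch q q m * qpoch q q n) * (S m - S n)"
    using q_nonzero qpoch_q_nonzero[of m] qpoch_q_nonzero[of n]
    by (simp add: divide_simps) (simp add: algebra_simps)
  finally show ?thesis
    unfolding S_def .
qed

end

theorem theorem1p3:
  fixes q z v :: complex and m n :: nat
  assumes "q \<noteq> 0" and "z \<noteq> 0"
    and "\<And>j::nat. j \<ge> 1 \<Longrightarrow> q ^ j \<noteq> 1"
    and "\<And>j::nat. z * q ^ j \<noteq> 1"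
    and "\<And>j::nat. v * q ^ j \<noteq> 1"
  shows "(\<Sum>k=1..n. qpoch (q/z) q k * qpoch (v * q^m) q k * qpoch z q (n-k) * qpoch z q m
            / (qpoch q q k * qpoch v q k * qpoch q q (n-k) * qpoch (q^k) q (m+1)) * z^k)
       - (\<Sum>k=1..m. qpoch (q/z) q k * qpoch (v * q^n) q k * qpoch z q (m-k) * qpoch z q n
            / (qpoch q q k * qpoch v q k * qpoch q q (m-k) * qpoch (q^k) q (n+1)) * z^k)
       = (1 - z / q) * qpoch z q m * qpoch z q n / (qpoch q q m * qpoch q q n)
         * ((\<Sum>k=1..m. q^k / ((1 - z * q^(k-1)) * (1 - q^k)))
          - (\<Sum>k=1..n. q^k / ((1 - z * q^(k-1)) * (1 - q^k))))"
proof -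
  interpret qzv_generic q z v
    using assms by unfold_locales auto
  show ?thesis
    using lhs_sum_difference[of n m] unfolding lhs_sum_def .
qed

end
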